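(* Let $k\ge3$, $n\ge2$, $N\in\mathbb{Z}$, and let $P$ be an $N$-representative of a $k$-spiral $[P]\in\mathcal{P}_n$. If $P$ is of type $\alpha$, then $(P_i,P_{i+k},P_{i+2k})$ is positive for all $i>N$. If $P$ is of type $\beta$, then $(P_{i+2k},P_{i+k},P_i)$ is positive for all $i>N$.
   Context: The affine patch $\mathbb{A}^2=\{[x:y:1]\}\subset\mathbb{RP}^2$ is identified with $\mathbb{R}^2$. For $V_1,V_2,V_3\in\mathbb{A}^2$ with affine coordinates $\tilde V_j=(x_j,y_j,1)$, $\mathcal{O}(V_1,V_2,V_3)=\det(\tilde V_1,\tilde V_2,\tilde V_3)$; the triple is positive if $\mathcal{O}>0$. $\operatorname{int}(V_1,V_2,V_3)$ is the interior of the affine triangle. A twisted $n$-gon is a map $P:\mathbb{Z}\to\mathbb{RP}^2$ with every three consecutive points non-collinear and $P_{i+n}=M(P_i)$ for a fixed $M\in\mathrm{PGL}_3(\mathbb{R})$; $\mathcal{P}_n$ is the set of classes modulo projective equivalence. $P$ is $k$-nice if $P_i,P_{i+1},P_{i+k},P_{i+k+1}$ are in general position for every $i$. For $k\ge3$, $[P]\in\mathcal{P}_n$ is a $k$-spiral of type $\alpha$ (resp. $\beta$) if it is $k$-nice and for every $N\in\mathbb{Z}$ some representative $P$ satisfies, for all $i\ge N$: $P_i\in\mathbb{A}^2$, $(P_i,P_{i+1},P_{i+2})$ positive, and (type $\alpha$) $(P_i,P_{i+1},P_{i+k+1})$ positive with $P_{i+k}\in\operatorname{int}(P_i,P_{i+1},P_{i+k+1})$,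 resp. (type $\beta$) $(P_i,P_{i+1},P_{i+k})$ positive with $P_{i+k+1}\in\operatorname{int}(P_i,P_{i+1},P_{i+k})$. Such a representative is called an $N$-representative of type $\alpha$ (resp. $\beta$). *)

theory Defs
  imports "HOL-Analysis.Analysis"
begin

text \<open>Points of RP^2 are represented by nonzero homogeneous coordinate vectors in real^3;
  two vectors represent the same point iff they are nonzero multiples of each other.\<close>

definition same_pt :: "real^3 \<Rightarrow> real^3 \<Rightarrow> bool" where
  "same_pt u v \<longleftrightarrow> (\<exists>c. c \<noteq> 0 \<and> v = c *\<^sub>R u)"

definition det3 :: "real^3 \<Rightarrow> real^3 \<Rightarrow> real^3 \<Rightarrow> real" where
  "det3 u v w = det (\<chi> r::3. if r = 1 then u else if r = 2 then v else w)"

definition noncollinear :: "real^3 \<Rightarrow> real^3 \<Rightarrow> real^3 \<Rightarrow> bool" where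
  "noncollinear u v w \<longleftrightarrow> det3 u v w \<noteq> 0"

definition twisted_ngon :: "nat \<Rightarrow> (int \<Rightarrow> real^3) \<Rightarrow> bool" where
  "twisted_ngon n P \<longleftrightarrow>
     (\<forall>i. P i \<noteq> 0) \<and>
     (\<forall>i. noncollinear (P i) (P (i+1)) (P (i+2))) \<and>
     (\<exists>M::real^3^3. invertible M \<and> (\<forall>i. same_pt (M *v P i) (P (i + int n))))"

definition proj_equiv :: "(int \<Rightarrow> real^3) \<Rightarrow> (int \<Rightarrow> real^3) \<Rightarrow> bool" where
  "proj_equiv P Q \<longleftrightarrow> (\<exists>A::real^3^3. invertible A \<and> (\<forall>i. same_pt (A *v P i) (Q i)))"

definition gen_pos4 :: "real^3 \<Rightarrow> real^3 \<Rightarrow> real^3 \<Rightarrow> real^3 \<Rightarrow> bool" where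
  "gen_pos4 a b c d \<longleftrightarrow> noncollinear a b c \<and> noncollinear a b d \<and>
      noncollinear a c d \<and> noncollinear b c d"

definition k_nice :: "nat \<Rightarrow> (int \<Rightarrow> real^3) \<Rightarrow> bool" where
  "k_nice k P \<longleftrightarrow> (\<forall>i. gen_pos4 (P i) (P (i+1)) (P (i + int k)) (P (i + int k + 1)))"

definition in_affine :: "real^3 \<Rightarrow> bool" where
  "in_affine u \<longleftrightarrow> u $ 3 \<noteq> 0"

definition aff3 :: "real^3 \<Rightarrow> real^3" where
  "aff3 u = (1 / u $ 3) *\<^sub>R u"

definition aff2 :: "real^3 \<Rightarrow> real^2" where
  "aff2 u = (\<chi> j::2. if j = 1 then u $ 1 / u $ 3 else u $ 2 / u $ 3)"

definition orient :: "real^3 \<Rightarrow> real^3 \<Rightarrow> real^3 \<Rightarrow> real" where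
  "orient u v w = det3 (aff3 u) (aff3 v) (aff3 w)"

definition positive3 :: "real^3 \<Rightarrow> real^3 \<Rightarrow> real^3 \<Rightarrow> bool" where
  "positive3 u v w \<longleftrightarrow> orient u v w > 0"

definition in_tri_int :: "real^3 \<Rightarrow> real^3 \<Rightarrow> real^3 \<Rightarrow> real^3 \<Rightarrow> bool" where
  "in_tri_int p u v w \<longleftrightarrow> aff2 p \<in> interior (convex hull {aff2 u, aff2 v, aff2 w})"

definition N_rep_alpha :: "nat \<Rightarrow> int \<Rightarrow> (int \<Rightarrow> real^3) \<Rightarrow> bool" where
  "N_rep_alpha k N P \<longleftrightarrow> (\<forall>i\<ge>N.
     in_affine (P i) \<and> positive3 (P i) (P (i+1)) (P (i+2)) \<and>
     positive3 (P i) (P (i+1)) (P (i + int k + 1)) \<and>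
     in_tri_int (P (i + int k)) (P i) (P (i+1)) (P (i + int k + 1)))"

definition N_rep_beta :: "nat \<Rightarrow> int \<Rightarrow> (int \<Rightarrow> real^3) \<Rightarrow> bool" where
  "N_rep_beta k N P \<longleftrightarrow> (\<forall>i\<ge>N.
     in_affine (P i) \<and> positive3 (P i) (P (i+1)) (P (i+2)) \<and>
     positive3 (P i) (P (i+1)) (P (i + int k)) \<and>
     in_tri_int (P (i + int k + 1)) (P i) (P (i+1)) (P (i + int k)))"

text \<open>[P] is a k-spiral of type alpha / beta (P a twisted n-gon; k >= 3 is assumed separately).\<close>
definition spiral_alpha :: "nat \<Rightarrow> nat \<Rightarrow> (int \<Rightarrow> real^3) \<Rightarrow> bool" where
  "spiral_alpha n k P \<longleftrightarrow> twisted_ngon n P \<and> k_nice k P \<and>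
     (\<forall>N. \<exists>Q. proj_equiv P Q \<and> N_rep_alpha k N Q)"

definition spiral_beta :: "nat \<Rightarrow> nat \<Rightarrow> (int \<Rightarrow> real^3) \<Rightarrow> bool" where
  "spiral_beta n k P \<longleftrightarrow> twisted_ngon n P \<and> k_nice k P \<and>
     (\<forall>N. \<exists>Q. proj_equiv P Q \<and> N_rep_beta k N Q)"

end

theory Submission
  imports Defs
begin

text \<open>In the affine chart every hypothesis is a sign condition on the planar orientation
  \<open>orient2 a b c = det (b - a, c - a)\<close>; a point strictly inside a positive triangle lies strictly
  to the left of each of its edges. Around \<open>V = P(i+k)\<close> the representative property at the indices
  \<open>i-1, i, i+k-1, i+k\<close> shows that the ray to \<open>D = P(i+2k)\<close> lies between the rays to
  \<open>Q = P(i+k+1)\<close> and \<open>M = P(i+k-1)\<close>, and that \<open>W = P(i)\<close> lies on the same side of both lines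
  \<open>VQ\<close> and \<open>VM\<close>. The three-term Grassmann-Pluecker relation among \<open>V, D, W, Q, M\<close> then fixes the
  sign of \<open>orient2 V D W\<close>.\<close>

definition orient2 :: "real^2 \<Rightarrow> real^2 \<Rightarrow> real^2 \<Rightarrow> real" where
  "orient2 a b c = (b$1 - a$1) * (c$2 - a$2) - (b$2 - a$2) * (c$1 - a$1)"

lemma orient2_cycle: "orient2 a b c = orient2 b c a"
  by (simp add: orient2_def algebra_simps)

lemma orient2_swap: "orient2 a b c = - orient2 a c b"
  by (simp add: orient2_def algebra_simps)

lemma orient2_pluecker:
  "orient2 v d w * orient2 v q m = orient2 v d m * orient2 v q w + orient2 v q d * orient2 v m w"
  by (simp add: orient2_def algebra_simps)

lemma orient_eq_orient2:
  assumes "in_affine u" "in_affine v" "in_affine w"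
  shows "orient u v w = orient2 (aff2 u) (aff2 v) (aff2 w)"
  using assms
  by (simp add: orient_def det3_def det_3 aff3_def aff2_def orient2_def in_affine_def field_simps)

lemma positive3_iff_orient2:
  assumes "in_affine u" "in_affine v" "in_affine w"
  shows "positive3 u v w \<longleftrightarrow> 0 < orient2 (aff2 u) (aff2 v) (aff2 w)"
  using assms by (simp add: positive3_def orient_eq_orient2)


lemma orient2_convex_hull_nonneg:
  assumes "0 < orient2 a b c" and "x \<in> convex hull {a, b, c}"
  shows "0 \<le> orient2 a b x"
proof -
  obtain u v w where x: "x = u *\<^sub>R a + v *\<^sub>R b + w *\<^sub>R c"
    and "0 \<le> w" and uvw: "u + v + w = 1"
    using assms(2) unfolding convex_hull_3 by blast
  have u: "u = 1 - v - w" using uvw by simp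
  have "orient2 a b x = w * orient2 a b c"
    unfolding x orient2_def u by (simp add: algebra_simps)
  with \<open>0 \<le> w\<close> assms(1) show ?thesis by simp
qed

lemma orient2_interior_triangle_pos:
  assumes abc: "0 < orient2 a b c" and x: "x \<in> interior (convex hull {a, b, c})"
  shows "0 < orient2 a b x"
proof -
  obtain e where "0 < e" and e: "ball x e \<subseteq> convex hull {a, b, c}"
    using x mem_interior by blast
  \<comment> \<open>\<open>orient2 a b\<close> is affine with gradient \<open>n\<close>; step from \<open>x\<close> against the gradient.\<close>
  define n :: "real^2" where "n = vector [a$2 - b$2, b$1 - a$1]"
  have "n \<noteq> 0"
  proof
    assume "n = 0"
    then have "a$1 = b$1" "a$2 = b$2"
      by (metis n_def eq_iff_diff_eq_0 vector_2 zero_index)+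
    with abc show False by (simp add: orient2_def)
  qed
  then have "0 < norm n" by simp
  define t where "t = e / (2 * norm n)"
  define y where "y = x - t *\<^sub>R n"
  have "dist x y < e"
    using \<open>0 < norm n\<close> \<open>0 < e\<close> by (simp add: y_def t_def dist_norm)
  with e have "0 \<le> orient2 a b y"
    using orient2_convex_hull_nonneg[OF abc] by auto
  moreover have "orient2 a b y = orient2 a b x - t * (norm n)\<^sup>2"
    unfolding y_def orient2_def n_def power2_norm_eq_inner inner_vec_def
    by (simp add: sum_2 algebra_simps)
  moreover have "t * (norm n)\<^sup>2 = e * norm n / 2"
    using \<open>0 < norm n\<close> by (simp add: t_def power2_eq_square)
  moreover have "0 < e * norm n / 2"
    using \<open>0 < e\<close> \<open>0 < norm n\<close> by simp
  ultimately show ?thesis by linarith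
qed

lemma orient2_interior_triangle:
  assumes "0 < orient2 a b c" and "x \<in> interior (convex hull {a, b, c})"
  shows "0 < orient2 a b x" "0 < orient2 b c x" "0 < orient2 c a x"
proof -
  have "{a, b, c} = {b, c, a}" "{a, b, c} = {c, a, b}" by auto
  with assms orient2_cycle[of a b c] orient2_cycle[of b c a]
  show "0 < orient2 a b x" "0 < orient2 b c x" "0 < orient2 c a x"
    using orient2_interior_triangle_pos by metis+
qed

lemma orient2_between_rays:
  assumes "0 < orient2 v q d" "0 < orient2 v d m" "0 < orient2 v q m"
  shows orient2_between_rays_pos: "0 < orient2 v q w \<Longrightarrow> 0 < orient2 v m w \<Longrightarrow> 0 < orient2 v d w"
    and orient2_between_rays_neg: "orient2 v q w < 0 \<Longrightarrow> orient2 v m w < 0 \<Longrightarrow> orient2 v d w < 0"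
  using assms orient2_pluecker[of v d w q m]
  by (smt (verit) mult_pos_pos mult_pos_neg zero_less_mult_iff mult_less_0_iff)+


definition spiral_alpha_plane :: "nat \<Rightarrow> int \<Rightarrow> (int \<Rightarrow> real^2) \<Rightarrow> bool" where
  "spiral_alpha_plane k N p \<longleftrightarrow> (\<forall>j\<ge>N.
     0 < orient2 (p j) (p (j + 1)) (p (j + 2)) \<and>
     0 < orient2 (p j) (p (j + 1)) (p (j + int k + 1)) \<and>
     p (j + int k) \<in> interior (convex hull {p j, p (j + 1), p (j + int k + 1)}))"

definition spiral_beta_plane :: "nat \<Rightarrow> int \<Rightarrow> (int \<Rightarrow> real^2) \<Rightarrow> bool" where
  "spiral_beta_plane k N p \<longleftrightarrow> (\<forall>j\<ge>N.
     0 < orient2 (p j) (p (j + 1)) (p (j + 2)) \<and>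
     0 < orient2 (p j) (p (j + 1)) (p (j + int k)) \<and>
     p (j + int k + 1) \<in> interior (convex hull {p j, p (j + 1), p (j + int k)}))"

lemma spiral_alpha_plane_orient2:
  assumes p: "spiral_alpha_plane k N p" and "N < i"
  shows "0 < orient2 (p i) (p (i + int k)) (p (i + 2 * int k))"
proof -
  have rep: "0 < orient2 (p j) (p (j + 1)) (p (j + 2))"
    "0 < orient2 (p j) (p (j + 1)) (p (j + int k + 1))"
    "0 < orient2 (p j) (p (j + 1)) (p (j + int k))"
    "0 < orient2 (p (j + 1)) (p (j + int k + 1)) (p (j + int k))"
    "0 < orient2 (p (j + int k + 1)) (p j) (p (j + int k))"
    if "N \<le> j" for j
    using p that orient2_interior_triangle unfolding spiral_alpha_plane_def by blast+
  let ?V = "p (i + int k)" and ?M = "p (i + int k - 1)" and ?Q = "p (i + int k + 1)"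
    and ?W = "p i" and ?D = "p (i + 2 * int k)"
  have "0 < orient2 ?M ?V ?D" using rep(2)[of "i + int k - 1"] \<open>N < i\<close> by (simp add: algebra_simps)
  then have VDM: "0 < orient2 ?V ?D ?M" by (metis orient2_cycle)
  have VQD: "0 < orient2 ?V ?Q ?D" using rep(3)[of "i + int k"] \<open>N < i\<close> by (simp add: algebra_simps)
  have "0 < orient2 ?M ?V ?Q" using rep(1)[of "i + int k - 1"] \<open>N < i\<close> by (simp add: algebra_simps)
  then have VQM: "0 < orient2 ?V ?Q ?M" by (metis orient2_cycle)
  have "0 < orient2 ?W ?V ?M" using rep(4)[of "i - 1"] \<open>N < i\<close> by (simp add: algebra_simps)
  then have VMW: "0 < orient2 ?V ?M ?W" by (metis orient2_cycle)
  have "0 < orient2 ?Q ?W ?V" using rep(5)[of i] \<open>N < i\<close> by (simp add: algebra_simps)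
  then have VQW: "0 < orient2 ?V ?Q ?W" by (metis orient2_cycle)
  have "0 < orient2 ?V ?D ?W" using orient2_between_rays_pos[OF VQD VDM VQM VQW VMW] .
  then show ?thesis by (metis orient2_cycle)
qed

lemma spiral_beta_plane_orient2:
  assumes p: "spiral_beta_plane k N p" and "N < i"
  shows "0 < orient2 (p (i + 2 * int k)) (p (i + int k)) (p i)"
proof -
  have rep: "0 < orient2 (p j) (p (j + 1)) (p (j + 2))"
    "0 < orient2 (p j) (p (j + 1)) (p (j + int k))"
    "0 < orient2 (p j) (p (j + 1)) (p (j + int k + 1))"
    "0 < orient2 (p (j + 1)) (p (j + int k)) (p (j + int k + 1))"
    "0 < orient2 (p (j + int k)) (p j) (p (j + int k + 1))"
    if "N \<le> j" for j
    using p that orient2_interior_triangle unfolding spiral_beta_plane_def by blast+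
  let ?V = "p (i + int k)" and ?M = "p (i + int k - 1)" and ?Q = "p (i + int k + 1)"
    and ?W = "p i" and ?D = "p (i + 2 * int k)"
  have "0 < orient2 ?M ?V ?D" using rep(3)[of "i + int k - 1"] \<open>N < i\<close> by (simp add: algebra_simps)
  then have VDM: "0 < orient2 ?V ?D ?M" by (metis orient2_cycle)
  have VQD: "0 < orient2 ?V ?Q ?D" using rep(2)[of "i + int k"] \<open>N < i\<close> by (simp add: algebra_simps)
  have "0 < orient2 ?M ?V ?Q" using rep(1)[of "i + int k - 1"] \<open>N < i\<close> by (simp add: algebra_simps)
  then have VQM: "0 < orient2 ?V ?Q ?M" by (metis orient2_cycle)
  have "0 < orient2 ?W ?M ?V" using rep(4)[of "i - 1"] \<open>N < i\<close> by (simp add: algebra_simps)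
  then have VMW: "orient2 ?V ?M ?W < 0" by (metis orient2_cycle orient2_swap neg_0_less_iff_less)
  have "0 < orient2 ?V ?W ?Q" using rep(5)[of i] \<open>N < i\<close> by (simp add: algebra_simps)
  then have VQW: "orient2 ?V ?Q ?W < 0" by (metis orient2_swap neg_0_less_iff_less)
  have "orient2 ?V ?D ?W < 0" using orient2_between_rays_neg[OF VQD VDM VQM VQW VMW] .
  then show ?thesis by (metis orient2_cycle orient2_swap neg_0_less_iff_less)
qed


lemma N_rep_alpha_plane:
  assumes "N_rep_alpha k N P"
  shows "spiral_alpha_plane k N (aff2 \<circ> P)"
proof -
  have "in_affine (P j)" if "N \<le> j" for j
    using assms that by (simp add: N_rep_alpha_def)
  with assms show ?thesis
    by (simp add: N_rep_alpha_def spiral_alpha_plane_def positive3_iff_orient2 in_tri_int_def)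
qed

lemma N_rep_beta_plane:
  assumes "N_rep_beta k N P"
  shows "spiral_beta_plane k N (aff2 \<circ> P)"
proof -
  have "in_affine (P j)" if "N \<le> j" for j
    using assms that by (simp add: N_rep_beta_def)
  with assms show ?thesis
    by (simp add: N_rep_beta_def spiral_beta_plane_def positive3_iff_orient2 in_tri_int_def)
qed

lemma N_rep_alpha_positive3:
  assumes "N_rep_alpha k N P" and "N < i"
  shows "positive3 (P i) (P (i + int k)) (P (i + 2 * int k))"
proof -
  have "in_affine (P j)" if "N \<le> j" for j
    using assms(1) that by (simp add: N_rep_alpha_def)
  with spiral_alpha_plane_orient2[OF N_rep_alpha_plane[OF assms(1)] assms(2)] assms(2)
  show ?thesis by (simp add: positive3_iff_orient2)
qed

lemma N_rep_beta_positive3: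
  assumes "N_rep_beta k N P" and "N < i"
  shows "positive3 (P (i + 2 * int k)) (P (i + int k)) (P i)"
proof -
  have "in_affine (P j)" if "N \<le> j" for j
    using assms(1) that by (simp add: N_rep_beta_def)
  with spiral_beta_plane_orient2[OF N_rep_beta_plane[OF assms(1)] assms(2)] assms(2)
  show ?thesis by (simp add: positive3_iff_orient2)
qed

theorem mainTheorem4:
  fixes k n :: nat and N :: int and P :: "int \<Rightarrow> real^3"
  assumes "k \<ge> 3" and "n \<ge> 2"
  shows "(spiral_alpha n k P \<and> N_rep_alpha k N P \<longrightarrow>
            (\<forall>i>N. positive3 (P i) (P (i + int k)) (P (i + 2 * int k)))) \<and>
         (spiral_beta n k P \<and> N_rep_beta k N P \<longrightarrow>
            (\<forall>i>N. positive3 (P (i + 2 * int k)) (P (i + int k)) (P i)))"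
  using N_rep_alpha_positive3 N_rep_beta_positive3 by blast

end
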